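(* Let $\sigma$ be a signature, $\Delta$ a set of $\mathcal{CO}[\sigma]$-formulas and $\varphi$ a $\mathcal{COD}[\sigma]$-formula. Then $\Delta\models^g\varphi$ if and only if $\Delta\models^g\varphi^\ast_f$ for some full instantiation $\varphi^\ast_f$ of $\varphi^\ast$.
   Context: A signature $\sigma=(\mathrm{Dom},\mathrm{Ran})$: $\mathrm{Dom}$ nonempty finite set of variables, each with nonempty finite range $\mathrm{Ran}(X)$; $\mathbf X=\mathbf x$ abbreviates $X_1=x_1\wedge\dots\wedge X_n=x_n$ ($\mathbf x\in\mathrm{Ran}(\mathbf X)=\prod\mathrm{Ran}(X_i)$), inconsistent if it contains $X=x,X=x'$ with $x\ne x'$. $\mathcal{CO}[\sigma]$: $\alpha::=X=x\mid\neg\alpha\mid\alpha\wedge\alpha\mid\alpha\vee\alpha\mid\mathbf X=\mathbf x\;\Box\!\!\rightarrow\alpha$. $\mathcal{COD}[\sigma]$: $\varphi::=X=x\mid{=}(\mathbf X;Y)\mid\neg\alpha\mid\varphi\wedge\varphi\mid\varphi\vee\varphi\mid\mathbf X=\mathbf x\;\Box\!\!\rightarrow\varphi$ ($\alpha\in\mathcal{CO}[\sigma]$); ${=}(Y)$ is ${=}(\mathbf X;Y)$ with empty $\mathbf X$ (constancy atom). Systems of functions $\mathcal F$: for each $V\in\mathrm{En}(\mathcal F)\subseteq\mathrm{Dom}$ parents $PA^{\mathcal F}_V\subseteq\mathrm{Dom}\setminus\{V\}$ and $\mathcal F_V:\mathrm{Ran}(PA^{\mathcal F}_V)\to\mathrm{Ran}(V)$;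 $\mathrm{Ex}(\mathcal F)=\mathrm{Dom}\setminus\mathrm{En}(\mathcal F)$; only recursive (acyclic parent graph). An assignment $s$ is compatible with $\mathcal F$ if $s(V)=\mathcal F_V(s(PA^{\mathcal F}_V))$ for $V\in\mathrm{En}(\mathcal F)$. A generalized causal team is a set $T$ of compatible pairs $(s,\mathcal F)$; $T^-=\{s:(s,\mathcal F)\in T\}$. For consistent $\mathbf X=\mathbf x$: $\mathcal F_{\mathbf X=\mathbf x}$ restricts $\mathcal F$ to $\mathrm{En}(\mathcal F)\setminus\mathbf X$; $s^{\mathcal F}_{\mathbf X=\mathbf x}$: $X_i\mapsto x_i$, $V\mapsto s(V)$ on $\mathrm{Ex}(\mathcal F)\setminus\mathbf X$, $V\mapsto\mathcal F_V(s^{\mathcal F}_{\mathbf X=\mathbf x}(PA^{\mathcal F}_V))$ on $\mathrm{En}(\mathcal F)\setminus\mathbf X$; $T_{\mathbf X=\mathbf x}=\{(s^{\mathcal F}_{\mathbf X=\mathbf x},\mathcal F_{\mathbf X=\mathbf x}):(s,\mathcal F)\in T\}$. $\models^g$: $T\models X=x$ iff $s(X)=x$ for all $s\in T^-$; $T\models{=}(\mathbf X;Y)$ iff for all $s,s'\in T^-$, $s(\mathbf X)=s'(\mathbf X)$ implies $s(Y)=s'(Y)$; $T\models\neg\alpha$ iff $\{(s,\mathcal F)\}\not\models\alpha$ for all $(s,\mathcal F)\in T$; $\wedge$ classical; $T\models\varphi\vee\psi$ iff $T=T_1\cup T_2$ with $T_1\models\varphi$, $T_2\models\psi$; $T\models\mathbf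 X=\mathbf x\;\Box\!\!\rightarrow\varphi$ iff $\mathbf X=\mathbf x$ inconsistent or $T_{\mathbf X=\mathbf x}\models\varphi$. $\Delta\models^g\varphi$: every generalized causal team over $\sigma$ satisfying all of $\Delta$ satisfies $\varphi$. $\varphi^\ast$ is obtained from $\varphi$ by replacing every occurrence of a dependence atom ${=}(\mathbf X;Y)$ by $\bigvee_{\mathbf x\in\mathrm{Ran}(\mathbf X)}(\mathbf X=\mathbf x\wedge{=}(Y))$ (so all dependence atoms in $\varphi^\ast$ are constancy atoms). Let $\mathbf d=\langle[{=}(X_1),k_1],\dots,[{=}(X_n),k_n]\rangle$ list all occurrences of constancy atoms in $\varphi^\ast$ ($[{=}(X_i),k_i]$ the $k_i$-th occurrence of ${=}(X_i)$). An instantiating function is $f:\{1,\dots,n\}\to\bigcup_i\mathrm{Ran}(X_i)$ with $f(i)\in\mathrm{Ran}(X_i)$; the full instantiation $\varphi^\ast_f$ is obtained from $\varphi^\ast$ by replacing each occurrence $[{=}(X_i),k_i]$ by $X_i=f(i)$ (a $\mathcal{CO}[\sigma]$-formula). *)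

theory Defs
  imports Main "HOL-Library.FuncSet"
begin

definition signature :: "'v set \<Rightarrow> ('v \<Rightarrow> 'a set) \<Rightarrow> bool" where
  "signature Dom Ran \<longleftrightarrow> finite Dom \<and> Dom \<noteq> {} \<and>
     (\<forall>X\<in>Dom. finite (Ran X) \<and> Ran X \<noteq> {})"

text \<open>A conjunction X1=x1 and ... and Xn=xn is represented by a list of pairs.
  Dep Xs Y is the dependence atom =(Xs;Y); Dep [] Y is the constancy atom =(Y).
  Cf xs phi is the counterfactual (xs box-arrow phi).\<close>

datatype ('v, 'a) form =
    Eq 'v 'a
  | Dep "'v list" 'v
  | Neg "('v, 'a) form"
  | And "('v, 'a) form" "('v, 'a) form"
  | Or "('v, 'a) form" "('v, 'a) form"
  | Cf "('v \<times> 'a) list" "('v, 'a) form"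

definition wf_asgn :: "'v set \<Rightarrow> ('v \<Rightarrow> 'a set) \<Rightarrow> ('v \<times> 'a) list \<Rightarrow> bool" where
  "wf_asgn Dom Ran xs \<longleftrightarrow> (\<forall>(X, x)\<in>set xs. X \<in> Dom \<and> x \<in> Ran X)"

fun is_CO :: "'v set \<Rightarrow> ('v \<Rightarrow> 'a set) \<Rightarrow> ('v, 'a) form \<Rightarrow> bool" where
  "is_CO Dom Ran (Eq X x) \<longleftrightarrow> X \<in> Dom \<and> x \<in> Ran X"
| "is_CO Dom Ran (Dep Xs Y) \<longleftrightarrow> False"
| "is_CO Dom Ran (Neg a) \<longleftrightarrow> is_CO Dom Ran a"
| "is_CO Dom Ran (And a b) \<longleftrightarrow> is_CO Dom Ran a \<and> is_CO Dom Ran b"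
| "is_CO Dom Ran (Or a b) \<longleftrightarrow> is_CO Dom Ran a \<and> is_CO Dom Ran b"
| "is_CO Dom Ran (Cf xs a) \<longleftrightarrow> wf_asgn Dom Ran xs \<and> is_CO Dom Ran a"

fun is_COD :: "'v set \<Rightarrow> ('v \<Rightarrow> 'a set) \<Rightarrow> ('v, 'a) form \<Rightarrow> bool" where
  "is_COD Dom Ran (Eq X x) \<longleftrightarrow> X \<in> Dom \<and> x \<in> Ran X"
| "is_COD Dom Ran (Dep Xs Y) \<longleftrightarrow> set Xs \<subseteq> Dom \<and> Y \<in> Dom"
| "is_COD Dom Ran (Neg a) \<longleftrightarrow> is_CO Dom Ran a"
| "is_COD Dom Ran (And a b) \<longleftrightarrow> is_COD Dom Ran a \<and> is_COD Dom Ran b"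
| "is_COD Dom Ran (Or a b) \<longleftrightarrow> is_COD Dom Ran a \<and> is_COD Dom Ran b"
| "is_COD Dom Ran (Cf xs a) \<longleftrightarrow> wf_asgn Dom Ran xs \<and> is_COD Dom Ran a"

definition consistent :: "('v \<times> 'a) list \<Rightarrow> bool" where
  "consistent xs \<longleftrightarrow> (\<forall>(X, x)\<in>set xs. \<forall>(X', x')\<in>set xs. X = X' \<longrightarrow> x = x')"

text \<open>Components for exogenous variables
  and arguments outside Ran(PA V) are fixed to trivial values, so that
  records correspond one-to-one to systems of functions.\<close>

record ('v, 'a) sysf =
  En :: "'v set"
  PA :: "'v \<Rightarrow> 'v set"
  Fn :: "'v \<Rightarrow> ('v \<Rightarrow> 'a) \<Rightarrow> 'a"

definition parent_rel :: "('v, 'a) sysf \<Rightarrow> ('v \<times> 'v) set" where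
  "parent_rel F = {(P, V). V \<in> En F \<and> P \<in> PA F V}"

definition sys_of_funs :: "'v set \<Rightarrow> ('v \<Rightarrow> 'a set) \<Rightarrow> ('v, 'a) sysf \<Rightarrow> bool" where
  "sys_of_funs Dom Ran F \<longleftrightarrow>
     En F \<subseteq> Dom \<and>
     (\<forall>V. V \<notin> En F \<longrightarrow> PA F V = {} \<and> Fn F V = (\<lambda>_. undefined)) \<and>
     (\<forall>V\<in>En F. PA F V \<subseteq> Dom - {V} \<and>
        (\<forall>t\<in>PiE (PA F V) Ran. Fn F V t \<in> Ran V) \<and>
        (\<forall>t. t \<notin> PiE (PA F V) Ran \<longrightarrow> Fn F V t = undefined)) \<and>
     acyclic (parent_rel F)"

definition compatible :: "'v set \<Rightarrow> ('v \<Rightarrow> 'a set) \<Rightarrow> ('v \<Rightarrow> 'a) \<Rightarrow> ('v, 'a) sysf \<Rightarrow> bool" where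
  "compatible Dom Ran s F \<longleftrightarrow> s \<in> PiE Dom Ran \<and>
     (\<forall>V\<in>En F. s V = Fn F V (restrict s (PA F V)))"

type_synonym ('v, 'a) team = "(('v \<Rightarrow> 'a) \<times> ('v, 'a) sysf) set"

definition gen_causal_team :: "'v set \<Rightarrow> ('v \<Rightarrow> 'a set) \<Rightarrow> ('v, 'a) team \<Rightarrow> bool" where
  "gen_causal_team Dom Ran T \<longleftrightarrow>
     (\<forall>(s, F)\<in>T. sys_of_funs Dom Ran F \<and> compatible Dom Ran s F)"

definition interv_asg :: "('v \<times> 'a) list \<Rightarrow> ('v, 'a) sysf \<Rightarrow> ('v \<Rightarrow> 'a) \<Rightarrow> ('v \<Rightarrow> 'a)" where
  "interv_asg xs F s = (THE g. \<forall>V. g V =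
     (case map_of xs V of
        Some x \<Rightarrow> x
      | None \<Rightarrow> (if V \<in> En F then Fn F V (restrict g (PA F V)) else s V)))"

definition interv_sys :: "('v \<times> 'a) list \<Rightarrow> ('v, 'a) sysf \<Rightarrow> ('v, 'a) sysf" where
  "interv_sys xs F =
     \<lparr> En = En F - fst ` set xs,
       PA = (\<lambda>V. if V \<in> En F - fst ` set xs then PA F V else {}),
       Fn = (\<lambda>V. if V \<in> En F - fst ` set xs then Fn F V else (\<lambda>_. undefined)) \<rparr>"

definition interv_team :: "('v \<times> 'a) list \<Rightarrow> ('v, 'a) team \<Rightarrow> ('v, 'a) team" where
  "interv_team xs T = (\<lambda>(s, F). (interv_asg xs F s, interv_sys xs F)) ` T"

primrec sat :: "('v, 'a) form \<Rightarrow> ('v, 'a) team \<Rightarrow> bool" where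
  "sat (Eq X x) T \<longleftrightarrow> (\<forall>(s, F)\<in>T. s X = x)"
| "sat (Dep Xs Y) T \<longleftrightarrow> (\<forall>(s, F)\<in>T. \<forall>(s', F')\<in>T.
      (\<forall>X\<in>set Xs. s X = s' X) \<longrightarrow> s Y = s' Y)"
| "sat (Neg a) T \<longleftrightarrow> (\<forall>p\<in>T. \<not> sat a {p})"
| "sat (And a b) T \<longleftrightarrow> sat a T \<and> sat b T"
| "sat (Or a b) T \<longleftrightarrow> (\<exists>T1 T2. T = T1 \<union> T2 \<and> sat a T1 \<and> sat b T2)"
| "sat (Cf xs a) T \<longleftrightarrow> \<not> consistent xs \<or> sat a (interv_team xs T)"

definition entails :: "'v set \<Rightarrow> ('v \<Rightarrow> 'a set) \<Rightarrow> ('v, 'a) form set \<Rightarrow> ('v, 'a) form \<Rightarrow> bool" where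
  "entails Dom Ran \<Delta> \<phi> \<longleftrightarrow>
     (\<forall>T. gen_causal_team Dom Ran T \<longrightarrow> (\<forall>\<delta>\<in>\<Delta>. sat \<delta> T) \<longrightarrow> sat \<phi> T)"

fun big_conj_eq :: "('v \<times> 'a) list \<Rightarrow> ('v, 'a) form \<Rightarrow> ('v, 'a) form" where
  "big_conj_eq [] c = c"
| "big_conj_eq ((X, x) # ps) c = And (Eq X x) (big_conj_eq ps c)"

fun big_disj :: "('v, 'a) form list \<Rightarrow> ('v, 'a) form" where
  "big_disj [] = undefined"
| "big_disj [a] = a"
| "big_disj (a # b # as) = Or a (big_disj (b # as))"

definition enum_ran :: "('v \<Rightarrow> 'a set) \<Rightarrow> 'v \<Rightarrow> 'a list" where
  "enum_ran Ran X = (SOME l. distinct l \<and> set l = Ran X)"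

primrec star :: "('v \<Rightarrow> 'a set) \<Rightarrow> ('v, 'a) form \<Rightarrow> ('v, 'a) form" where
  "star Ran (Eq X x) = Eq X x"
| "star Ran (Dep Xs Y) = (if Xs = [] then Dep [] Y else
     big_disj (map (\<lambda>xs. big_conj_eq (zip Xs xs) (Dep [] Y))
                   (product_lists (map (enum_ran Ran) Xs))))"
| "star Ran (Neg a) = Neg (star Ran a)"
| "star Ran (And a b) = And (star Ran a) (star Ran b)"
| "star Ran (Or a b) = Or (star Ran a) (star Ran b)"
| "star Ran (Cf xs a) = Cf xs (star Ran a)"

primrec const_occs :: "('v, 'a) form \<Rightarrow> 'v list" where
  "const_occs (Eq X x) = []"
| "const_occs (Dep Xs Y) = (if Xs = [] then [Y] else [])"
| "const_occs (Neg a) = const_occs a"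
| "const_occs (And a b) = const_occs a @ const_occs b"
| "const_occs (Or a b) = const_occs a @ const_occs b"
| "const_occs (Cf xs a) = const_occs a"

definition inst_fun :: "('v \<Rightarrow> 'a set) \<Rightarrow> ('v, 'a) form \<Rightarrow> (nat \<Rightarrow> 'a) \<Rightarrow> bool" where
  "inst_fun Ran \<phi> f \<longleftrightarrow>
     (\<forall>i\<in>{1..length (const_occs \<phi>)}. f i \<in> Ran (const_occs \<phi> ! (i - 1)))"

text \<open>full_inst f k phi replaces the j-th constancy-atom occurrence of phi,
  =(X), by X = f (k + j).\<close>
primrec full_inst :: "(nat \<Rightarrow> 'a) \<Rightarrow> nat \<Rightarrow> ('v, 'a) form \<Rightarrow> ('v, 'a) form" where
  "full_inst f k (Eq X x) = Eq X x"
| "full_inst f k (Dep Xs Y) = (if Xs = [] then Eq Y (f (Suc k)) else Dep Xs Y)"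
| "full_inst f k (Neg a) = Neg (full_inst f k a)"
| "full_inst f k (And a b) = And (full_inst f k a) (full_inst f (k + length (const_occs a)) b)"
| "full_inst f k (Or a b) = Or (full_inst f k a) (full_inst f (k + length (const_occs a)) b)"
| "full_inst f k (Cf xs a) = Cf xs (full_inst f k a)"

end

theory Submission
  imports Defs
begin

(*
  Replacing each dependence atom =(X;Y) by the disjunction, over all values x of X, of
  X = x /\ =(Y) preserves truth in every team whose assignments take values in the ranges,
  so phi and phi* are equivalent.  A team satisfies phi* iff it satisfies some full
  instantiation phi*_f: X = x implies =(X), and conversely every occurrence of =(X) is
  witnessed by the constant value that X takes on the subteam where the occurrence is
  evaluated.  The full instantiations and the formulas of Delta contain no dependence atoms,
  hence are flat: true in a team iff true in each of its singletons.  So if every phi*_f had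
  a counterexample T_f, the union of the T_f would satisfy Delta but no phi*_f, hence not phi.
*)

section \<open>Flatness of dependence-free formulas\<close>

fun dep_free :: "('v, 'a) form \<Rightarrow> bool" where
  "dep_free (Eq X x) \<longleftrightarrow> True"
| "dep_free (Dep Xs Y) \<longleftrightarrow> False"
| "dep_free (Neg a) \<longleftrightarrow> dep_free a"
| "dep_free (And a b) \<longleftrightarrow> dep_free a \<and> dep_free b"
| "dep_free (Or a b) \<longleftrightarrow> dep_free a \<and> dep_free b"
| "dep_free (Cf xs a) \<longleftrightarrow> dep_free a"

lemma is_CO_dep_free: "is_CO D R a \<Longrightarrow> dep_free a"
  by (induction a) auto

lemma star_dep_free: "dep_free a \<Longrightarrow> star R a = a"
  by (induction a) auto

lemma const_occs_dep_free: "dep_free a \<Longrightarrow> const_occs a = []"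
  by (induction a) auto

lemma full_inst_dep_free: "dep_free a \<Longrightarrow> full_inst f k a = a"
  by (induction a arbitrary: k) (auto simp: const_occs_dep_free)

lemma sat_dep_free_iff_singletons:
  "dep_free a \<Longrightarrow> sat a T \<longleftrightarrow> (\<forall>p\<in>T. sat a {p})"
proof (induction a arbitrary: T)
  case (Eq X x)
  show ?case by auto
next
  case (Dep Xs Y)
  then show ?case by simp
next
  case (Neg a)
  show ?case by simp
next
  case (And a b)
  have "sat a T \<longleftrightarrow> (\<forall>p\<in>T. sat a {p})" "sat b T \<longleftrightarrow> (\<forall>p\<in>T. sat b {p})"
    using And.IH[of T] And.prems by simp_all
  then show ?case by auto
next
  case (Or a b)
  have IH: "sat a U \<longleftrightarrow> (\<forall>p\<in>U. sat a {p})" "sat b U \<longleftrightarrow> (\<forall>p\<in>U. sat b {p})" for U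
    using Or.IH[of U] Or.prems by simp_all
  have "sat (Or a b) U \<longleftrightarrow> (\<forall>p\<in>U. sat a {p} \<or> sat b {p})" for U
  proof
    assume "sat (Or a b) U"
    then obtain U1 U2 where "U = U1 \<union> U2" "sat a U1" "sat b U2" by auto
    then show "\<forall>p\<in>U. sat a {p} \<or> sat b {p}" using IH(1)[of U1] IH(2)[of U2] by blast
  next
    assume "\<forall>p\<in>U. sat a {p} \<or> sat b {p}"
    then have "U = {p\<in>U. sat a {p}} \<union> {p\<in>U. sat b {p}}" by blast
    moreover have "sat a {p\<in>U. sat a {p}}" "sat b {p\<in>U. sat b {p}}"
      using IH(1)[of "{p\<in>U. sat a {p}}"] IH(2)[of "{p\<in>U. sat b {p}}"] by blast+
    ultimately show "sat (Or a b) U" by (simp only: sat.simps) blast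
  qed
  then show ?case by (simp only: singleton_iff ball_simps(10)) blast
next
  case (Cf xs a)
  have IH: "sat a U \<longleftrightarrow> (\<forall>q\<in>U. sat a {q})" for U
    using Cf.IH[of U] Cf.prems by simp
  have "sat a (interv_team xs T) \<longleftrightarrow> (\<forall>p\<in>T. sat a (interv_team xs {p}))"
    unfolding IH[of "interv_team xs T"] IH[of "interv_team xs {_}"] by (auto simp: interv_team_def)
  then show ?case by simp
qed

lemma sat_dep_free_subset: "dep_free a \<Longrightarrow> sat a T \<Longrightarrow> U \<subseteq> T \<Longrightarrow> sat a U"
  using sat_dep_free_iff_singletons[of a T] sat_dep_free_iff_singletons[of a U] by blast

lemma sat_dep_free_UN: "dep_free a \<Longrightarrow> \<forall>i\<in>I. sat a (C i) \<Longrightarrow> sat a (\<Union>i\<in>I. C i)"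
  using sat_dep_free_iff_singletons[of a "\<Union>i\<in>I. C i"] sat_dep_free_iff_singletons[of a "C _"]
  by blast

lemma gen_causal_team_UN:
  "\<forall>i\<in>I. gen_causal_team D R (C i) \<Longrightarrow> gen_causal_team D R (\<Union>i\<in>I. C i)"
  unfolding gen_causal_team_def by blast

lemma entails_disjunction_property:
  assumes "\<forall>\<delta>\<in>\<Delta>. dep_free \<delta>" and "\<forall>i\<in>I. dep_free (\<psi> i)"
    and "\<And>T. gen_causal_team D R T \<Longrightarrow> \<forall>\<delta>\<in>\<Delta>. sat \<delta> T \<Longrightarrow> \<exists>i\<in>I. sat (\<psi> i) T"
  shows "\<exists>i\<in>I. entails D R \<Delta> (\<psi> i)"
proof (rule ccontr)
  assume "\<not> ?thesis"
  then have "\<forall>i\<in>I. \<exists>T. gen_causal_team D R T \<and> (\<forall>\<delta>\<in>\<Delta>. sat \<delta> T) \<and> \<not> sat (\<psi> i) T"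
    unfolding entails_def by simp
  from bchoice[OF this] obtain C where C: "\<forall>i\<in>I.
      gen_causal_team D R (C i) \<and> (\<forall>\<delta>\<in>\<Delta>. sat \<delta> (C i)) \<and> \<not> sat (\<psi> i) (C i)"
    by blast
  let ?T = "\<Union>i\<in>I. C i"
  have "gen_causal_team D R ?T" using C by (intro gen_causal_team_UN) blast
  moreover have "\<forall>\<delta>\<in>\<Delta>. sat \<delta> ?T"
  proof
    fix \<delta> assume "\<delta> \<in> \<Delta>"
    then show "sat \<delta> ?T" using C assms(1) by (intro sat_dep_free_UN) auto
  qed
  ultimately obtain i where i: "i \<in> I" "sat (\<psi> i) ?T" using assms(3) by blast
  have "C i \<subseteq> ?T" using i(1) by blast
  then have "sat (\<psi> i) (C i)" by (rule sat_dep_free_subset[OF bspec[OF assms(2) i(1)] i(2)])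
  with bspec[OF C i(1)] show False by simp
qed

section \<open>Teams with values in the ranges\<close>

definition wf_team :: "'v set \<Rightarrow> ('v \<Rightarrow> 'a set) \<Rightarrow> ('v, 'a) team \<Rightarrow> bool" where
  "wf_team D R T \<longleftrightarrow> (\<forall>(s, F)\<in>T. s \<in> PiE D R \<and> sys_of_funs D R F)"

lemma wf_team_PiE: "wf_team D R T \<Longrightarrow> p \<in> T \<Longrightarrow> fst p \<in> PiE D R"
  unfolding wf_team_def by (cases p) auto

lemma wf_team_subset: "wf_team D R T \<Longrightarrow> U \<subseteq> T \<Longrightarrow> wf_team D R U"
  unfolding wf_team_def by blast

lemma gen_causal_team_imp_wf_team: "gen_causal_team D R T \<Longrightarrow> wf_team D R T"
  unfolding wf_team_def gen_causal_team_def compatible_def by auto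

lemma wf_parent_rel:
  assumes "finite D" and F: "sys_of_funs D R F"
  shows "wf (parent_rel F)"
proof -
  have "parent_rel F \<subseteq> D \<times> D" using F unfolding sys_of_funs_def parent_rel_def by blast
  with \<open>finite D\<close> have "finite (parent_rel F)" by (simp add: finite_subset)
  moreover have "acyclic (parent_rel F)" using F unfolding sys_of_funs_def by blast
  ultimately show ?thesis by (rule finite_acyclic_wf)
qed

lemma wf_fixpoint_unique:
  assumes "wf R" and "adm_wf R H"
  shows "\<exists>!g. \<forall>x. g x = H g x"
proof
  show "\<forall>x. wfrec R H x = H (wfrec R H) x"
    using wfrec_fixpoint[OF assms] by metis
next
  fix g assume g: "\<forall>x. g x = H g x"
  show "g = wfrec R H"
  proof
    fix x show "g x = wfrec R H x"
    proof (induction x rule: wf_induct_rule[OF assms(1)])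
      case (1 x)
      then have "H g x = H (wfrec R H) x" using assms(2) unfolding adm_wf_def by blast
      then show ?case using g wfrec_fixpoint[OF assms] by metis
    qed
  qed
qed

(* interv_asg is defined by THE; well-foundedness of the parent relation makes its defining
   equation uniquely solvable, so the description can be unfolded. *)
lemma interv_asg_unfold:
  assumes "wf (parent_rel F)"
  shows "interv_asg xs F s V = (case map_of xs V of
      Some x \<Rightarrow> x
    | None \<Rightarrow> (if V \<in> En F then Fn F V (restrict (interv_asg xs F s) (PA F V)) else s V))"
proof -
  define H where "H = (\<lambda>g V. case map_of xs V of
      Some x \<Rightarrow> x
    | None \<Rightarrow> (if V \<in> En F then Fn F V (restrict g (PA F V)) else s V))"
  have "adm_wf (parent_rel F) H"
    unfolding adm_wf_def H_def parent_rel_def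
    by (auto split: option.split intro!: arg_cong[where f = "Fn F _"])
  then have "\<exists>!g. \<forall>V. g V = H g V" by (rule wf_fixpoint_unique[OF assms])
  from theI'[OF this] show ?thesis unfolding interv_asg_def H_def by blast
qed

lemma interv_asg_PiE:
  assumes "finite D" and F: "sys_of_funs D R F" and s: "s \<in> PiE D R" and xs: "wf_asgn D R xs"
  shows "interv_asg xs F s \<in> PiE D R"
proof -
  have wf: "wf (parent_rel F)" using wf_parent_rel assms(1) F .
  let ?g = "interv_asg xs F s"
  have "(V \<in> D \<longrightarrow> ?g V \<in> R V) \<and> (V \<notin> D \<longrightarrow> ?g V = undefined)" for V
  proof (induction V rule: wf_induct_rule[OF wf])
    case (1 V)
    consider x where "map_of xs V = Some x"
      | "map_of xs V = None" "V \<in> En F" | "map_of xs V = None" "V \<notin> En F"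
      by (cases "map_of xs V") auto
    then show ?case
    proof cases
      case (1 x)
      then have "(V, x) \<in> set xs" by (rule map_of_SomeD)
      with xs 1 show ?thesis unfolding interv_asg_unfold[OF wf, of xs s V] wf_asgn_def by auto
    next
      case 2
      then have "V \<in> D" "PA F V \<subseteq> D - {V}" "\<forall>t\<in>PiE (PA F V) R. Fn F V t \<in> R V"
        using F unfolding sys_of_funs_def by auto
      moreover have "restrict ?g (PA F V) \<in> PiE (PA F V) R"
        using 1 \<open>PA F V \<subseteq> D - {V}\<close> \<open>V \<in> En F\<close> by (auto simp: parent_rel_def)
      ultimately show ?thesis using 2 unfolding interv_asg_unfold[OF wf, of xs s V] by auto
    next
      case 3
      with s show ?thesis unfolding interv_asg_unfold[OF wf, of xs s V] by (auto simp: PiE_def extensional_def)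
    qed
  qed
  then show ?thesis by (auto simp: PiE_def extensional_def)
qed

lemma interv_sys_simps:
  "En (interv_sys xs F) = En F - fst ` set xs"
  "PA (interv_sys xs F) V = (if V \<in> En F - fst ` set xs then PA F V else {})"
  "Fn (interv_sys xs F) V = (if V \<in> En F - fst ` set xs then Fn F V else (\<lambda>_. undefined))"
  by (simp_all add: interv_sys_def)

lemma parent_rel_interv_sys: "parent_rel (interv_sys xs F) \<subseteq> parent_rel F"
  unfolding parent_rel_def interv_sys_simps by auto

lemma sys_of_funs_interv_sys:
  assumes "sys_of_funs D R F"
  shows "sys_of_funs D R (interv_sys xs F)"
proof -
  have "acyclic (parent_rel (interv_sys xs F))"
    using assms acyclic_subset[OF _ parent_rel_interv_sys] unfolding sys_of_funs_def by blast
  with assms show ?thesis unfolding sys_of_funs_def interv_sys_simps by auto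
qed

lemma wf_team_interv_team:
  assumes "finite D" and "wf_team D R T" and "wf_asgn D R xs"
  shows "wf_team D R (interv_team xs T)"
  unfolding wf_team_def interv_team_def
proof (clarsimp)
  fix s F assume "(s, F) \<in> T"
  with assms(2) have "s \<in> PiE D R" and F: "sys_of_funs D R F" unfolding wf_team_def by auto
  then show "interv_asg xs F s \<in> PiE D R \<and> sys_of_funs D R (interv_sys xs F)"
    by (simp add: interv_asg_PiE[OF assms(1) F _ assms(3)] sys_of_funs_interv_sys)
qed

section \<open>The translation of dependence atoms\<close>

lemma sat_Eq_iff: "sat (Eq X x) T \<longleftrightarrow> (\<forall>p\<in>T. fst p X = x)"
  by (simp add: case_prod_beta)

lemma sat_Dep_iff:
  "sat (Dep Xs Y) T \<longleftrightarrow> (\<forall>p\<in>T. \<forall>q\<in>T. map (fst p) Xs = map (fst q) Xs \<longrightarrow> fst p Y = fst q Y)"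
  unfolding map_eq_conv by (auto simp: case_prod_beta)

lemma sat_const_iff: "sat (Dep [] Y) T \<longleftrightarrow> (\<forall>p\<in>T. \<forall>q\<in>T. fst p Y = fst q Y)"
  unfolding sat_Dep_iff by simp

lemma sat_big_conj_eq:
  "length xs = length Xs \<Longrightarrow>
   sat (big_conj_eq (zip Xs xs) c) T \<longleftrightarrow> (\<forall>p\<in>T. map (fst p) Xs = xs) \<and> sat c T"
proof (induction Xs arbitrary: xs)
  case (Cons X Xs)
  then obtain x xs' where "xs = x # xs'" "length xs' = length Xs" by (cases xs) auto
  with Cons.IH[of xs'] show ?case by (auto simp: case_prod_beta)
qed simp

lemma sat_big_disj_iff:
  "distinct P \<Longrightarrow> P \<noteq> [] \<Longrightarrow>
   sat (big_disj (map g P)) T \<longleftrightarrow> (\<exists>C. T = (\<Union>x\<in>set P. C x) \<and> (\<forall>x\<in>set P. sat (g x) (C x)))"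
proof (induction P arbitrary: T)
  case (Cons x P)
  show ?case
  proof (cases "P = []")
    case True
    then show ?thesis by auto
  next
    case False
    then obtain y P' where P: "P = y # P'" by (cases P) auto
    have x: "x \<notin> set P" and IH: "sat (big_disj (map g P)) U \<longleftrightarrow>
        (\<exists>C. U = (\<Union>x\<in>set P. C x) \<and> (\<forall>x\<in>set P. sat (g x) (C x)))" for U
      using Cons.IH[of U] Cons.prems False by auto
    have "sat (big_disj (map g (x # P))) T \<longleftrightarrow>
        (\<exists>T1 T2. T = T1 \<union> T2 \<and> sat (g x) T1 \<and> sat (big_disj (map g P)) T2)"
      using P by simp
    also have "\<dots> \<longleftrightarrow> (\<exists>C. T = (\<Union>z\<in>set (x # P). C z) \<and> (\<forall>z\<in>set (x # P). sat (g z) (C z)))"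
    proof
      assume "\<exists>T1 T2. T = T1 \<union> T2 \<and> sat (g x) T1 \<and> sat (big_disj (map g P)) T2"
      then obtain T1 C where "T = T1 \<union> (\<Union>z\<in>set P. C z)" "sat (g x) T1"
          "\<forall>z\<in>set P. sat (g z) (C z)"
        unfolding IH by blast
      moreover have "(\<Union>z\<in>set P. (C(x := T1)) z) = (\<Union>z\<in>set P. C z)"
        using x by (intro SUP_cong) auto
      ultimately show "\<exists>C. T = (\<Union>z\<in>set (x # P). C z) \<and> (\<forall>z\<in>set (x # P). sat (g z) (C z))"
        using x by (intro exI[of _ "C(x := T1)"]) auto
    next
      assume "\<exists>C. T = (\<Union>z\<in>set (x # P). C z) \<and> (\<forall>z\<in>set (x # P). sat (g z) (C z))"
      then obtain C where "T = C x \<union> (\<Union>z\<in>set P. C z)" "sat (g x) (C x)"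
          "\<forall>z\<in>set P. sat (g z) (C z)"
        by auto
      then show "\<exists>T1 T2. T = T1 \<union> T2 \<and> sat (g x) T1 \<and> sat (big_disj (map g P)) T2"
        unfolding IH by blast
    qed
    finally show ?thesis .
  qed
qed simp

lemma UN_eq_fiber:
  assumes "T = (\<Union>x\<in>S. C x)" and "\<forall>x\<in>S. \<forall>p\<in>C x. l p = x" and "x \<in> S"
  shows "C x = {p\<in>T. l p = x}"
  using assms by auto

lemma sat_big_disj_partition:
  assumes "distinct P" and "P \<noteq> []" and len: "\<forall>xs\<in>set P. length xs = length Xs"
  shows "sat (big_disj (map (\<lambda>xs. big_conj_eq (zip Xs xs) c) P)) T \<longleftrightarrow>
    (\<forall>p\<in>T. map (fst p) Xs \<in> set P) \<and> (\<forall>xs\<in>set P. sat c {p\<in>T. map (fst p) Xs = xs})"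
    (is "_ \<longleftrightarrow> ?covered \<and> ?blocks")
proof -
  have "sat (big_disj (map (\<lambda>xs. big_conj_eq (zip Xs xs) c) P)) T \<longleftrightarrow>
      (\<exists>C. T = (\<Union>xs\<in>set P. C xs) \<and>
         (\<forall>xs\<in>set P. (\<forall>p\<in>C xs. map (fst p) Xs = xs) \<and> sat c (C xs)))"
    using len by (simp add: sat_big_disj_iff[OF assms(1,2)] sat_big_conj_eq)
  also have "\<dots> \<longleftrightarrow> ?covered \<and> ?blocks"
  proof
    assume "\<exists>C. T = (\<Union>xs\<in>set P. C xs) \<and>
         (\<forall>xs\<in>set P. (\<forall>p\<in>C xs. map (fst p) Xs = xs) \<and> sat c (C xs))"
    then obtain C where T: "T = (\<Union>xs\<in>set P. C xs)"
      and C: "\<forall>xs\<in>set P. (\<forall>p\<in>C xs. map (fst p) Xs = xs) \<and> sat c (C xs)" by blast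
    have labels: "\<forall>xs\<in>set P. \<forall>p\<in>C xs. map (fst p) Xs = xs" using C by blast
    have blocks: "C xs = {p\<in>T. map (fst p) Xs = xs}" if "xs \<in> set P" for xs
      using UN_eq_fiber[OF T labels that] .
    have ?covered
    proof
      fix p assume "p \<in> T"
      then obtain xs where "xs \<in> set P" "p \<in> C xs" unfolding T by blast
      with C show "map (fst p) Xs \<in> set P" by auto
    qed
    moreover have ?blocks using C blocks by simp
    ultimately show "?covered \<and> ?blocks" ..
  next
    assume "?covered \<and> ?blocks"
    then show "\<exists>C. T = (\<Union>xs\<in>set P. C xs) \<and>
         (\<forall>xs\<in>set P. (\<forall>p\<in>C xs. map (fst p) Xs = xs) \<and> sat c (C xs))"
      by (intro exI[of _ "\<lambda>xs. {p\<in>T. map (fst p) Xs = xs}"]) auto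
  qed
  finally show ?thesis .
qed

lemma
  assumes "signature D R" and "X \<in> D"
  shows distinct_enum_ran: "distinct (enum_ran R X)"
    and set_enum_ran: "set (enum_ran R X) = R X"
proof -
  have "finite (R X)" using assms unfolding signature_def by blast
  then have "\<exists>l. distinct l \<and> set l = R X" using finite_distinct_list by metis
  then have "distinct (enum_ran R X) \<and> set (enum_ran R X) = R X"
    unfolding enum_ran_def by (rule someI_ex)
  then show "distinct (enum_ran R X)" and "set (enum_ran R X) = R X" by auto
qed

lemma set_product_lists_enum_ran:
  assumes "signature D R" and "set Xs \<subseteq> D"
  shows "set (product_lists (map (enum_ran R) Xs)) =
    {xs. length xs = length Xs \<and> (\<forall>i<length Xs. xs ! i \<in> R (Xs ! i))}"
proof -
  have "\<forall>i<length Xs. set (enum_ran R (Xs ! i)) = R (Xs ! i)"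
    using set_enum_ran[OF assms(1)] assms(2) nth_mem by blast
  then show ?thesis unfolding product_lists_set by (auto simp: list_all2_conv_all_nth)
qed

lemma product_lists_enum_ran_nonempty:
  assumes "signature D R" and "set Xs \<subseteq> D"
  shows "product_lists (map (enum_ran R) Xs) \<noteq> []"
proof -
  have "\<forall>i<length Xs. R (Xs ! i) \<noteq> {}"
    using assms nth_mem unfolding signature_def by blast
  then have "map (\<lambda>X. SOME v. v \<in> R X) Xs \<in> set (product_lists (map (enum_ran R) Xs))"
    unfolding set_product_lists_enum_ran[OF assms] by (simp add: some_in_eq)
  then show ?thesis by auto
qed

lemma sat_star_Dep:
  assumes sig: "signature D R" and Xs: "set Xs \<subseteq> D" and T: "wf_team D R T"
  shows "sat (star R (Dep Xs Y)) T \<longleftrightarrow> sat (Dep Xs Y) T"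
proof (cases "Xs = []")
  case False
  let ?P = "product_lists (map (enum_ran R) Xs)"
  note P = set_product_lists_enum_ran[OF sig Xs]
  have distinct: "distinct ?P"
    by (rule distinct_product_lists) (use distinct_enum_ran[OF sig] Xs in auto)
  have nonempty: "?P \<noteq> []" using product_lists_enum_ran_nonempty[OF sig Xs] .
  have covered: "\<forall>p\<in>T. map (fst p) Xs \<in> set ?P"
  proof
    fix p assume "p \<in> T"
    with T have "fst p \<in> PiE D R" by (rule wf_team_PiE)
    then show "map (fst p) Xs \<in> set ?P" unfolding P using Xs nth_mem by (auto simp: PiE_iff)
  qed
  have "\<forall>xs\<in>set ?P. length xs = length Xs" unfolding P by simp
  note partition = sat_big_disj_partition[OF distinct nonempty this, of "Dep [] Y" T]
  have "sat (star R (Dep Xs Y)) T \<longleftrightarrow>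
      sat (big_disj (map (\<lambda>xs. big_conj_eq (zip Xs xs) (Dep [] Y)) ?P)) T"
    using False by simp
  also have "\<dots> \<longleftrightarrow> (\<forall>xs\<in>set ?P. sat (Dep [] Y) {p\<in>T. map (fst p) Xs = xs})"
    by (simp only: partition eqTrueI[OF covered] simp_thms)
  also have "\<dots> \<longleftrightarrow> sat (Dep Xs Y) T"
    unfolding sat_const_iff unfolding sat_Dep_iff
  proof (intro iffI ballI impI)
    fix p q assume blocks: "\<forall>xs\<in>set ?P. \<forall>p\<in>{p\<in>T. map (fst p) Xs = xs}.
        \<forall>q\<in>{p\<in>T. map (fst p) Xs = xs}. fst p Y = fst q Y"
      and p: "p \<in> T" and q: "q \<in> T" and pq: "map (fst p) Xs = map (fst q) Xs"
    have "p \<in> {p'\<in>T. map (fst p') Xs = map (fst p) Xs}" "q \<in> {p'\<in>T. map (fst p') Xs = map (fst p) Xs}"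
      using p q pq by simp_all
    with bspec[OF blocks bspec[OF covered p]] show "fst p Y = fst q Y" by blast
  next
    fix xs p q assume "\<forall>p\<in>T. \<forall>q\<in>T. map (fst p) Xs = map (fst q) Xs \<longrightarrow> fst p Y = fst q Y"
      and "p \<in> {p\<in>T. map (fst p) Xs = xs}" "q \<in> {p\<in>T. map (fst p) Xs = xs}"
    then show "fst p Y = fst q Y" by (metis (mono_tags, lifting) mem_Collect_eq)
  qed
  finally show ?thesis .
qed simp

lemma sat_star_iff:
  assumes sig: "signature D R"
  shows "wf_team D R T \<Longrightarrow> is_COD D R \<phi> \<Longrightarrow> sat (star R \<phi>) T \<longleftrightarrow> sat \<phi> T"
proof (induction \<phi> arbitrary: T)
  case (Eq X x)
  show ?case by simp
next
  case (Dep Xs Y)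
  then show ?case using sat_star_Dep[OF sig] by simp
next
  case (Neg a)
  then have "dep_free a" using is_CO_dep_free by simp
  then show ?case by (simp add: star_dep_free)
next
  case (And a b)
  then show ?case by simp
next
  case (Or a b)
  have "sat (star R a) U \<longleftrightarrow> sat a U" "sat (star R b) U \<longleftrightarrow> sat b U" if "U \<subseteq> T" for U
    using Or.IH[OF wf_team_subset[OF Or.prems(1) that]] Or.prems(2) by simp_all
  then show ?case by auto
next
  case (Cf xs a)
  have "finite D" using sig unfolding signature_def by blast
  with Cf.prems have "wf_team D R (interv_team xs T)" by (simp add: wf_team_interv_team)
  then show ?case using Cf.IH Cf.prems(2) by simp
qed

fun is_COD_const :: "'v set \<Rightarrow> ('v \<Rightarrow> 'a set) \<Rightarrow> ('v, 'a) form \<Rightarrow> bool" where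
  "is_COD_const D R (Eq X x) \<longleftrightarrow> True"
| "is_COD_const D R (Dep Xs Y) \<longleftrightarrow> Xs = [] \<and> Y \<in> D"
| "is_COD_const D R (Neg a) \<longleftrightarrow> dep_free a"
| "is_COD_const D R (And a b) \<longleftrightarrow> is_COD_const D R a \<and> is_COD_const D R b"
| "is_COD_const D R (Or a b) \<longleftrightarrow> is_COD_const D R a \<and> is_COD_const D R b"
| "is_COD_const D R (Cf xs a) \<longleftrightarrow> wf_asgn D R xs \<and> is_COD_const D R a"

lemma is_COD_const_big_conj_eq: "is_COD_const D R (big_conj_eq ps c) \<longleftrightarrow> is_COD_const D R c"
  by (induction ps c rule: big_conj_eq.induct) auto

lemma is_COD_const_big_disj:
  "as \<noteq> [] \<Longrightarrow> \<forall>a\<in>set as. is_COD_const D R a \<Longrightarrow> is_COD_const D R (big_disj as)"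
  by (induction as rule: big_disj.induct) auto

lemma is_COD_const_star:
  assumes sig: "signature D R"
  shows "is_COD D R \<phi> \<Longrightarrow> is_COD_const D R (star R \<phi>)"
proof (induction \<phi>)
  case (Dep Xs Y)
  then have "product_lists (map (enum_ran R) Xs) \<noteq> []"
    using product_lists_enum_ran_nonempty[OF sig] by simp
  with Dep show ?case
    by (auto simp: is_COD_const_big_conj_eq intro!: is_COD_const_big_disj)
next
  case (Neg a)
  then show ?case by (simp add: is_CO_dep_free star_dep_free)
qed auto

section \<open>Full instantiations\<close>

lemma dep_free_full_inst: "is_COD_const D R a \<Longrightarrow> dep_free (full_inst f k a)"
  by (induction a arbitrary: k) (auto simp: full_inst_dep_free)

lemma set_const_occs_subset: "is_COD_const D R a \<Longrightarrow> set (const_occs a) \<subseteq> D"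
  by (induction a) (auto simp: const_occs_dep_free)

lemma sat_full_inst_imp_sat: "is_COD_const D R a \<Longrightarrow> sat (full_inst f k a) T \<Longrightarrow> sat a T"
proof (induction a arbitrary: k T)
  case (Eq X x)
  then show ?case by simp
next
  case (Dep Xs Y)
  then show ?case by (auto simp: case_prod_beta split: if_splits)
next
  case (Neg a)
  have "dep_free a" using Neg.prems(1) by simp
  with Neg.prems(2) show ?case by (simp add: full_inst_dep_free)
next
  case (And a b)
  show ?case
    using And.IH(1)[of k T] And.IH(2)[of "k + length (const_occs a)" T] And.prems by simp
next
  case (Or a b)
  let ?k = "k + length (const_occs a)"
  from Or.prems obtain T1 T2 where T: "T = T1 \<union> T2"
    "sat (full_inst f k a) T1" "sat (full_inst f ?k b) T2" by auto
  have "sat a T1" "sat b T2"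
    using Or.IH(1)[of k T1] Or.IH(2)[of ?k T2] Or.prems(1) T(2,3) by simp_all
  with T(1) show ?case by auto
next
  case (Cf xs a)
  show ?case using Cf.IH[of k "interv_team xs T"] Cf.prems by auto
qed

definition inst_from :: "('v \<Rightarrow> 'a set) \<Rightarrow> 'v list \<Rightarrow> nat \<Rightarrow> (nat \<Rightarrow> 'a) \<Rightarrow> bool" where
  "inst_from R Xs k f \<longleftrightarrow> (\<forall>i\<in>{1..length Xs}. f (k + i) \<in> R (Xs ! (i - 1)))"

lemma inst_fun_iff_inst_from: "inst_fun R \<psi> f \<longleftrightarrow> inst_from R (const_occs \<psi>) 0 f"
  by (simp add: inst_fun_def inst_from_def)

lemma inst_from_exists:
  assumes "\<forall>X\<in>set Xs. R X \<noteq> {}"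
  shows "\<exists>f. inst_from R Xs k f"
proof
  have "R (Xs ! (i - 1)) \<noteq> {}" if "i \<in> {1..length Xs}" for i
    using assms that by auto
  then show "inst_from R Xs k (\<lambda>i. SOME v. v \<in> R (Xs ! (i - k - 1)))"
    unfolding inst_from_def by (simp add: some_in_eq)
qed

lemma full_inst_cong:
  "\<forall>i. k < i \<and> i \<le> k + length (const_occs \<psi>) \<longrightarrow> f i = g i \<Longrightarrow> full_inst f k \<psi> = full_inst g k \<psi>"
proof (induction \<psi> arbitrary: k)
  case (And a b)
  then show ?case by (simp add: add.assoc)
next
  case (Or a b)
  then show ?case by (simp add: add.assoc)
qed auto

lemma inst_from_append:
  assumes f: "inst_from R Xs k f" and g: "inst_from R Ys (k + length Xs) g"
  shows "inst_from R (Xs @ Ys) k (\<lambda>i. if i \<le> k + length Xs then f i else g i)"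
  unfolding inst_from_def
proof
  fix i assume i: "i \<in> {1..length (Xs @ Ys)}"
  show "(if k + i \<le> k + length Xs then f (k + i) else g (k + i)) \<in> R ((Xs @ Ys) ! (i - 1))"
  proof (cases "i \<le> length Xs")
    case True
    with f i show ?thesis by (auto simp: inst_from_def nth_append)
  next
    case False
    let ?j = "i - length Xs"
    from False i have "?j \<in> {1..length Ys}" by auto
    with g have "g (k + length Xs + ?j) \<in> R (Ys ! (?j - 1))" unfolding inst_from_def by blast
    moreover have "\<not> i - 1 < length Xs" using False by simp
    ultimately show ?thesis using False by (simp add: nth_append)
  qed
qed

lemma ex_full_inst_join:
  assumes "\<exists>f. inst_from R (const_occs a) k f \<and> sat (full_inst f k a) T1"
    and "\<exists>g. inst_from R (const_occs b) (k + length (const_occs a)) g \<and>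
      sat (full_inst g (k + length (const_occs a)) b) T2"
  shows "\<exists>h. inst_from R (const_occs a @ const_occs b) k h \<and>
    sat (full_inst h k a) T1 \<and> sat (full_inst h (k + length (const_occs a)) b) T2"
proof -
  let ?n = "k + length (const_occs a)"
  from assms obtain f g where f: "inst_from R (const_occs a) k f" "sat (full_inst f k a) T1"
    and g: "inst_from R (const_occs b) ?n g" "sat (full_inst g ?n b) T2" by blast
  let ?h = "\<lambda>i. if i \<le> ?n then f i else g i"
  have "full_inst ?h k a = full_inst f k a" "full_inst ?h ?n b = full_inst g ?n b"
    by (rule full_inst_cong, simp)+
  with f(2) g(2) inst_from_append[OF f(1) g(1)] show ?thesis by (intro exI[of _ ?h]) simp
qed

lemma sat_const_imp_sat_Eq:
  assumes "signature D R" and "wf_team D R T" and "Y \<in> D" and "sat (Dep [] Y) T"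
  shows "\<exists>v\<in>R Y. sat (Eq Y v) T"
proof (cases "T = {}")
  case True
  with assms(1,3) show ?thesis unfolding signature_def by auto
next
  case False
  then obtain p where p: "p \<in> T" by blast
  from wf_team_PiE[OF assms(2) p] assms(3) have "fst p Y \<in> R Y" by (rule PiE_mem)
  moreover have "sat (Eq Y (fst p Y)) T"
    using assms(4) p unfolding sat_const_iff sat_Eq_iff by blast
  ultimately show ?thesis ..
qed

lemma sat_imp_sat_full_inst:
  assumes sig: "signature D R"
  shows "wf_team D R T \<Longrightarrow> is_COD_const D R \<psi> \<Longrightarrow> sat \<psi> T \<Longrightarrow>
    \<exists>f. inst_from R (const_occs \<psi>) k f \<and> sat (full_inst f k \<psi>) T"
proof (induction \<psi> arbitrary: k T)
  case (Eq X x)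
  then show ?case by (simp add: inst_from_def)
next
  case (Dep Xs Y)
  then have "Xs = []" and "Y \<in> D" by simp_all
  with Dep.prems(3) have "sat (Dep [] Y) T" by simp
  with sat_const_imp_sat_Eq[OF sig Dep.prems(1) \<open>Y \<in> D\<close>]
  obtain v where "v \<in> R Y" "sat (Eq Y v) T" by blast
  with \<open>Xs = []\<close> show ?case by (intro exI[of _ "\<lambda>_. v"]) (simp add: inst_from_def)
next
  case (Neg a)
  then have "dep_free a" by simp
  with Neg.prems(3) show ?case by (simp add: inst_from_def const_occs_dep_free full_inst_dep_free)
next
  case (And a b)
  have "\<exists>f. inst_from R (const_occs a) k f \<and> sat (full_inst f k a) T"
    "\<exists>g. inst_from R (const_occs b) (k + length (const_occs a)) g \<and>
      sat (full_inst g (k + length (const_occs a)) b) T"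
    using And.IH(1)[of T k] And.IH(2)[of T "k + length (const_occs a)"] And.prems by simp_all
  from ex_full_inst_join[OF this] show ?case by simp
next
  case (Or a b)
  obtain T1 T2 where T: "T = T1 \<union> T2" "sat a T1" "sat b T2" using Or.prems(3) by auto
  with wf_team_subset[OF Or.prems(1)] have "wf_team D R T1" "wf_team D R T2" by auto
  with Or.prems(2) T(2,3) have "\<exists>f. inst_from R (const_occs a) k f \<and> sat (full_inst f k a) T1"
    "\<exists>g. inst_from R (const_occs b) (k + length (const_occs a)) g \<and>
      sat (full_inst g (k + length (const_occs a)) b) T2"
    using Or.IH(1)[of T1 k] Or.IH(2)[of T2 "k + length (const_occs a)"] by simp_all
  from ex_full_inst_join[OF this] T(1) show ?case by auto
next
  case (Cf xs a)
  show ?case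
  proof (cases "consistent xs")
    case True
    have "finite D" using sig unfolding signature_def by blast
    with Cf.prems have "wf_team D R (interv_team xs T)" by (simp add: wf_team_interv_team)
    with Cf.IH[of "interv_team xs T" k] Cf.prems True show ?thesis by auto
  next
    case False
    have "set (const_occs a) \<subseteq> D" using set_const_occs_subset[of D R a] Cf.prems(2) by simp
    with sig have "\<forall>X\<in>set (const_occs a). R X \<noteq> {}" unfolding signature_def by blast
    then obtain f where "inst_from R (const_occs a) k f" using inst_from_exists by blast
    with False show ?thesis by auto
  qed
qed

lemma sat_iff_ex_full_inst:
  assumes "signature D R" and "wf_team D R T" and "is_COD D R \<phi>"
  shows "sat \<phi> T \<longleftrightarrow> (\<exists>f. inst_fun R (star R \<phi>) f \<and> sat (full_inst f 0 (star R \<phi>)) T)"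
proof -
  have \<psi>: "is_COD_const D R (star R \<phi>)" using is_COD_const_star[OF assms(1,3)] .
  have "sat \<phi> T \<longleftrightarrow> sat (star R \<phi>) T" using sat_star_iff[OF assms] by simp
  also have "\<dots> \<longleftrightarrow> (\<exists>f. inst_fun R (star R \<phi>) f \<and> sat (full_inst f 0 (star R \<phi>)) T)"
    using sat_imp_sat_full_inst[OF assms(1,2) \<psi>, of 0] sat_full_inst_imp_sat[OF \<psi>]
    by (auto simp: inst_fun_iff_inst_from)
  finally show ?thesis .
qed

theorem corollary5p17:
  fixes Dom :: "'v set" and Ran :: "'v \<Rightarrow> 'a set"
    and \<Delta> :: "('v, 'a) form set" and \<phi> :: "('v, 'a) form"
  assumes "signature Dom Ran"
    and "\<forall>\<delta>\<in>\<Delta>. is_CO Dom Ran \<delta>"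
    and "is_COD Dom Ran \<phi>"
  shows "entails Dom Ran \<Delta> \<phi> \<longleftrightarrow>
    (\<exists>f. inst_fun Ran (star Ran \<phi>) f \<and>
         entails Dom Ran \<Delta> (full_inst f 0 (star Ran \<phi>)))"
proof -
  let ?\<psi> = "star Ran \<phi>"
  have normal_form: "sat \<phi> T \<longleftrightarrow> (\<exists>f\<in>{f. inst_fun Ran ?\<psi> f}. sat (full_inst f 0 ?\<psi>) T)"
    if "gen_causal_team Dom Ran T" for T
    using sat_iff_ex_full_inst[OF assms(1) gen_causal_team_imp_wf_team[OF that] assms(3)] by simp
  have dep_free: "\<forall>\<delta>\<in>\<Delta>. dep_free \<delta>" "\<forall>f\<in>{f. inst_fun Ran ?\<psi> f}. dep_free (full_inst f 0 ?\<psi>)"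
    using assms(2) is_CO_dep_free dep_free_full_inst[OF is_COD_const_star[OF assms(1,3)]] by blast+
  show ?thesis
  proof
    assume entails: "entails Dom Ran \<Delta> \<phi>"
    have "\<exists>f\<in>{f. inst_fun Ran ?\<psi> f}. entails Dom Ran \<Delta> (full_inst f 0 ?\<psi>)"
    proof (rule entails_disjunction_property[OF dep_free])
      fix T assume "gen_causal_team Dom Ran T" and "\<forall>\<delta>\<in>\<Delta>. sat \<delta> T"
      with entails normal_form show "\<exists>f\<in>{f. inst_fun Ran ?\<psi> f}. sat (full_inst f 0 ?\<psi>) T"
        unfolding entails_def by blast
    qed
    then show "\<exists>f. inst_fun Ran ?\<psi> f \<and> entails Dom Ran \<Delta> (full_inst f 0 ?\<psi>)" by blast
  next
    assume "\<exists>f. inst_fun Ran ?\<psi> f \<and> entails Dom Ran \<Delta> (full_inst f 0 ?\<psi>)"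
    with normal_form show "entails Dom Ran \<Delta> \<phi>" unfolding entails_def by blast
  qed
qed

end
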